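(* Let $L=L(m,n;k,l)$ be an $L$-shaped supergrid graph with distinct vertices $s,t$ such that $m-k=1$, $n-l=2$, $l=1$, $k\ge 2$, and $\{s,t\}=\{(1,2),(2,3)\}$ or $\{s,t\}=\{(1,3),(2,2)\}$. Then every simple path between $s$ and $t$ in $L$ has at most $mn-kl-1$ vertices.
   Context: The infinite supergrid graph has as vertices all points $(x,y)\in\mathbb{Z}^2$, two distinct vertices $u,v$ being adjacent iff $|u_x-v_x|\le 1$ and $|u_y-v_y|\le 1$. For integers $m,n>1$ and $k,l\ge 1$ with $m-k\ge 1$, $n-l\ge 1$, $L(m,n;k,l)$ is the subgraph induced by $\{(x,y):1\le x\le m,\ 1\le y\le n\}\setminus\{(x,y): m-k+1\le x\le m,\ 1\le y\le l\}$ (so it has $mn-kl$ vertices). *)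

theory Defs
  imports Main
begin

definition supergrid_adj :: "int \<times> int \<Rightarrow> int \<times> int \<Rightarrow> bool" where
  "supergrid_adj u v \<longleftrightarrow> u \<noteq> v \<and> \<bar>fst u - fst v\<bar> \<le> 1 \<and> \<bar>snd u - snd v\<bar> \<le> 1"

text \<open>Vertex set of the L-shaped supergrid graph L(m,n;k,l); its edges are those of
  the supergrid graph induced on this set.\<close>
definition L_vertices :: "nat \<Rightarrow> nat \<Rightarrow> nat \<Rightarrow> nat \<Rightarrow> (int \<times> int) set" where
  "L_vertices m n k l =
     {(x, y). 1 \<le> x \<and> x \<le> int m \<and> 1 \<le> y \<and> y \<le> int n}
     - {(x, y). int m - int k + 1 \<le> x \<and> x \<le> int m \<and> 1 \<le> y \<and> y \<le> int l}"

definition simple_path_in :: "(int \<times> int) set \<Rightarrow> (int \<times> int) list \<Rightarrow> bool" where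
  "simple_path_in V p \<longleftrightarrow> p \<noteq> [] \<and> distinct p \<and> set p \<subseteq> V \<and>
     (\<forall>i. Suc i < length p \<longrightarrow> supergrid_adj (p ! i) (p ! Suc i))"

end

theory Submission
  imports Defs
begin

text \<open>\<open>L\<close> consists of the corner \<open>(1,1)\<close> and the two full rows \<open>y = 2, 3\<close>, so it has
  \<open>2m + 1 = mn - kl + 1 \<ge> 7\<close> vertices and only a Hamiltonian path could exceed the bound.
  The corner \<open>(1,1)\<close> is adjacent only to \<open>(1,2)\<close> and \<open>(2,2)\<close>, so a path through it
  traverses \<open>(1,2), (1,1), (2,2)\<close> consecutively. Combined with the small neighbourhoods of
  \<open>(1,2)\<close> and \<open>(1,3)\<close>, this forces every path between the given endpoints through \<open>(1,1)\<close>
  (and \<open>(1,3)\<close>) to stay within the first two columns, hence to have at most six vertices.\<close>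

lemma supergrid_adj_commute: "supergrid_adj u v = supergrid_adj v u"
  unfolding supergrid_adj_def by auto

lemma simple_path_in_rev:
  assumes "simple_path_in V p"
  shows "simple_path_in V (rev p)"
  unfolding simple_path_in_def
proof (intro conjI allI impI)
  show "rev p \<noteq> []" "distinct (rev p)" "set (rev p) \<subseteq> V"
    using assms by (auto simp: simple_path_in_def)
  fix i assume i: "Suc i < length (rev p)"
  have "supergrid_adj (p ! (length p - Suc (Suc i))) (p ! Suc (length p - Suc (Suc i)))"
    using assms i by (simp add: simple_path_in_def)
  moreover have "Suc (length p - Suc (Suc i)) = length p - Suc i"
    using i by simp
  ultimately show "supergrid_adj (rev p ! i) (rev p ! Suc i)"
    using i by (simp add: rev_nth supergrid_adj_commute)
qed

lemma simple_path_in_length_le_card: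
  assumes "simple_path_in V p" "finite V"
  shows "length p \<le> card V"
  using assms card_mono distinct_card unfolding simple_path_in_def by metis

lemma simple_path_in_set_eq_if_length_eq_card:
  assumes "simple_path_in V p" "finite V" "length p = card V"
  shows "set p = V"
  using assms card_subset_eq distinct_card unfolding simple_path_in_def by metis

lemma simple_path_in_inner_vertex:
  assumes "distinct p" "v \<in> set p" "v \<noteq> hd p" "v \<noteq> last p"
  obtains i where "p ! i = v" "0 < i" "Suc i < length p"
proof -
  obtain i where i: "i < length p" "p ! i = v"
    using assms(2) by (metis in_set_conv_nth)
  have "p \<noteq> []" using assms(2) by auto
  have "i \<noteq> 0"
    using i assms(3) \<open>p \<noteq> []\<close> by (cases i) (auto simp: hd_conv_nth)
  moreover have "i \<noteq> length p - 1"
    using i assms(4) \<open>p \<noteq> []\<close> by (auto simp: last_conv_nth)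
  ultimately show thesis
    using that i by simp
qed

lemma simple_path_in_inner_neighbours:
  assumes "simple_path_in V p" "0 < i" "Suc i < length p"
  shows "supergrid_adj (p ! i) (p ! (i - 1))" "supergrid_adj (p ! i) (p ! Suc i)"
    and "p ! (i - 1) \<in> V" "p ! Suc i \<in> V" "p ! (i - 1) \<noteq> p ! Suc i"
proof -
  have "Suc (i - 1) = i" using assms(2) by simp
  then show "supergrid_adj (p ! i) (p ! (i - 1))" "supergrid_adj (p ! i) (p ! Suc i)"
    using assms unfolding simple_path_in_def
    by (metis Suc_lessD supergrid_adj_commute)+
  show "p ! (i - 1) \<in> V" "p ! Suc i \<in> V"
    using assms unfolding simple_path_in_def by (auto dest: nth_mem)
  show "p ! (i - 1) \<noteq> p ! Suc i"
    using assms unfolding simple_path_in_def by (simp add: nth_eq_iff_index_eq)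
qed

lemma L_vertices_two_rows:
  assumes "m \<ge> 3"
  shows "L_vertices m 3 (m - 1) 1 = insert (1, 1) ({1..int m} \<times> {2, 3})"
  using assms by (auto simp: L_vertices_def of_nat_diff)

lemma card_L_vertices_two_rows:
  assumes "m \<ge> 3"
  shows "card (L_vertices m 3 (m - 1) 1) = 2 * m + 1"
proof -
  have "card ({1..int m} \<times> {2::int, 3}) = m * 2"
    by (simp add: card_cartesian_product)
  then show ?thesis
    unfolding L_vertices_two_rows[OF assms] by simp
qed

lemma L_vertices_two_rows_neighbours:
  assumes "m \<ge> 3" "w \<in> L_vertices m 3 (m - 1) 1"
  shows "supergrid_adj (1, 1) w \<Longrightarrow> w \<in> {(1, 2), (2, 2)}"
    and "supergrid_adj (1, 3) w \<Longrightarrow> w \<in> {(1, 2), (2, 2), (2, 3)}"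
    and "supergrid_adj (1, 2) w \<Longrightarrow> w \<in> {(1, 1), (1, 3), (2, 2), (2, 3)}"
  using assms(2) unfolding L_vertices_two_rows[OF assms(1)] by (auto simp: supergrid_adj_def)

lemma L_two_rows_path_12_23_length_le:
  assumes m: "m \<ge> 3" and P: "simple_path_in (L_vertices m 3 (m - 1) 1) p"
    and ends: "hd p = (1, 2)" "last p = (2, 3)"
    and through: "(1, 1) \<in> set p" "(1, 3) \<in> set p"
  shows "length p \<le> 5"
proof -
  define N where "N = length p"
  have "p \<noteq> []" "distinct p" using P by (auto simp: simple_path_in_def)
  then have first: "p ! 0 = (1, 2)" and final: "p ! (N - 1) = (2, 3)"
    using ends by (simp_all add: N_def hd_conv_nth last_conv_nth)
  have idx: "\<And>a b. a < N \<Longrightarrow> b < N \<Longrightarrow> p ! a = p ! b \<longleftrightarrow> a = b"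
    using \<open>distinct p\<close> by (simp add: N_def nth_eq_iff_index_eq)
  obtain i where i: "p ! i = (1, 1)" "0 < i" "Suc i < N"
    using simple_path_in_inner_vertex[OF \<open>distinct p\<close> through(1)] ends N_def by auto
  have "p ! (i - 1) \<in> {(1, 2), (2, 2)}" "p ! Suc i \<in> {(1, 2), (2, 2)}"
    "p ! (i - 1) \<noteq> p ! Suc i"
    using simple_path_in_inner_neighbours[OF P, of i] L_vertices_two_rows_neighbours(1)[OF m]
      i N_def by metis+
  moreover have "p ! Suc i \<noteq> p ! 0" using idx i by blast
  ultimately have "p ! Suc i = (2, 2)" "p ! (i - 1) = p ! 0" using first by auto
  then have "i - 1 = 0" using idx i by auto
  then have "i = 1" using i by simp
  then have second: "p ! 2 = (2, 2)"
    using \<open>p ! Suc i = (2, 2)\<close> by (simp add: numeral_2_eq_2)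
  \<comment> \<open>So \<open>p\<close> starts \<open>(1,2), (1,1), (2,2)\<close>, and the inner vertex \<open>(1,3)\<close> must sit
    between \<open>(2,2)\<close> and the endpoint \<open>(2,3)\<close>.\<close>
  obtain j where j: "p ! j = (1, 3)" "0 < j" "Suc j < N"
    using simple_path_in_inner_vertex[OF \<open>distinct p\<close> through(2)] ends N_def by auto
  have "j \<noteq> 1" "j \<noteq> 2" using j i \<open>i = 1\<close> second by auto
  have "p ! (j - 1) \<in> {(1, 2), (2, 2), (2, 3)}" "p ! Suc j \<in> {(1, 2), (2, 2), (2, 3)}"
    "p ! (j - 1) \<noteq> p ! Suc j"
    using simple_path_in_inner_neighbours[OF P, of j] L_vertices_two_rows_neighbours(2)[OF m]
      j N_def by metis+
  moreover have "p ! (j - 1) \<noteq> p ! 0" "p ! Suc j \<noteq> p ! 0" "p ! Suc j \<noteq> p ! 2"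
    using idx j \<open>j \<noteq> 1\<close> \<open>j \<noteq> 2\<close> by auto
  ultimately have "p ! Suc j = p ! (N - 1)" "p ! (j - 1) = p ! 2"
    using first final second by auto
  then have "Suc j = N - 1" "j = 3"
    using idx j by auto
  then show ?thesis by (simp add: N_def)
qed

lemma L_two_rows_path_13_22_length_le:
  assumes m: "m \<ge> 3" and P: "simple_path_in (L_vertices m 3 (m - 1) 1) p"
    and ends: "hd p = (1, 3)" "last p = (2, 2)"
    and through: "(1, 1) \<in> set p"
  shows "length p \<le> 6"
proof (rule ccontr)
  define N where "N = length p"
  assume "\<not> length p \<le> 6"
  then have "N \<ge> 7" by (simp add: N_def)
  have "p \<noteq> []" "distinct p" using P by (auto simp: simple_path_in_def)
  then have first: "p ! 0 = (1, 3)" and final: "p ! (N - 1) = (2, 2)"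
    using ends by (simp_all add: N_def hd_conv_nth last_conv_nth)
  have idx: "\<And>a b. a < N \<Longrightarrow> b < N \<Longrightarrow> p ! a = p ! b \<longleftrightarrow> a = b"
    using \<open>distinct p\<close> by (simp add: N_def nth_eq_iff_index_eq)
  obtain i where i: "p ! i = (1, 1)" "0 < i" "Suc i < N"
    using simple_path_in_inner_vertex[OF \<open>distinct p\<close> through] ends N_def by auto
  have "p ! (i - 1) \<in> {(1, 2), (2, 2)}" "p ! Suc i \<in> {(1, 2), (2, 2)}"
    "p ! (i - 1) \<noteq> p ! Suc i"
    using simple_path_in_inner_neighbours[OF P, of i] L_vertices_two_rows_neighbours(1)[OF m]
      i N_def by metis+
  moreover have "p ! (i - 1) \<noteq> p ! (N - 1)" using idx i by auto
  ultimately have "p ! Suc i = p ! (N - 1)" and pred_i: "p ! (i - 1) = (1, 2)" using final by auto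
  then have "i = N - 2" using idx i by auto
  \<comment> \<open>So \<open>p\<close> ends \<open>(1,2), (1,1), (2,2)\<close>; then \<open>(1,2)\<close> is entered from \<open>(2,3)\<close>, and all
    neighbours of the start \<open>(1,3)\<close> lie at the end of \<open>p\<close>.\<close>
  define h where "h = i - 1"
  have "0 < h" "Suc h < N" "Suc h = i" using \<open>i = N - 2\<close> \<open>N \<ge> 7\<close> by (auto simp: h_def)
  have "p ! (h - 1) \<in> {(1, 1), (1, 3), (2, 2), (2, 3)}"
    using simple_path_in_inner_neighbours[OF P \<open>0 < h\<close> \<open>Suc h < N\<close>[unfolded N_def]]
      L_vertices_two_rows_neighbours(3)[OF m] pred_i h_def by metis
  moreover have "p ! (h - 1) \<noteq> p ! i" "p ! (h - 1) \<noteq> p ! 0" "p ! (h - 1) \<noteq> p ! (N - 1)"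
    using idx \<open>Suc h = i\<close> \<open>i = N - 2\<close> \<open>N \<ge> 7\<close> by auto
  ultimately have pred_h: "p ! (h - 1) = (2, 3)" using i first final by auto
  have "supergrid_adj (p ! 0) (p ! Suc 0)" "p ! 1 \<in> L_vertices m 3 (m - 1) 1"
    using P \<open>N \<ge> 7\<close> unfolding simple_path_in_def N_def by (auto dest: nth_mem)
  then have "p ! 1 \<in> {p ! h, p ! (N - 1), p ! (h - 1)}"
    using L_vertices_two_rows_neighbours(2)[OF m] first pred_i final pred_h h_def by auto
  then show False
    using idx \<open>Suc h = i\<close> \<open>i = N - 2\<close> \<open>N \<ge> 7\<close> by auto
qed

theorem lemma12:
  fixes m n k l :: nat and s t :: "int \<times> int" and p :: "(int \<times> int) list"
  assumes "m > 1" "n > 1" "k \<ge> 1" "l \<ge> 1"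
    and "m - k = 1" "n - l = 2" "l = 1" "k \<ge> 2"
    and "s \<in> L_vertices m n k l" "t \<in> L_vertices m n k l" "s \<noteq> t"
    and "{s, t} = {(1, 2), (2, 3)} \<or> {s, t} = {(1, 3), (2, 2)}"
    and "simple_path_in (L_vertices m n k l) p" "hd p = s" "last p = t"
  shows "length p \<le> m * n - k * l - 1"
proof -
  have m: "m \<ge> 3" and shape: "n = 3" "l = 1" "k = m - 1" using assms(5-8) by auto
  let ?V = "L_vertices m 3 (m - 1) 1"
  have P: "simple_path_in ?V p" and P': "simple_path_in ?V (rev p)"
    using assms(13) simple_path_in_rev shape by auto
  have "finite ?V" using L_vertices_two_rows[OF m] by simp
  then have "length p \<le> 2 * m + 1"
    using simple_path_in_length_le_card[OF P] card_L_vertices_two_rows[OF m] by simp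
  moreover have "length p \<noteq> 2 * m + 1"
  proof
    assume "length p = 2 * m + 1"
    then have "set p = ?V"
      using simple_path_in_set_eq_if_length_eq_card[OF P \<open>finite ?V\<close>]
        card_L_vertices_two_rows[OF m] by simp
    then have through: "(1, 1) \<in> set p" "(1, 3) \<in> set p" "(1, 1) \<in> set (rev p)" "(1, 3) \<in> set (rev p)"
      using L_vertices_two_rows[OF m] m by auto
    have "length p \<le> 6"
      using assms(11,12,14,15) L_two_rows_path_12_23_length_le[OF m P _ _ through(1,2)]
        L_two_rows_path_12_23_length_le[OF m P' _ _ through(3,4)]
        L_two_rows_path_13_22_length_le[OF m P _ _ through(1)]
        L_two_rows_path_13_22_length_le[OF m P' _ _ through(3)]
      by (auto simp: doubleton_eq_iff hd_rev last_rev)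
    then show False using \<open>length p = 2 * m + 1\<close> m by simp
  qed
  ultimately show ?thesis using shape m by (simp add: algebra_simps)
qed

end
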